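(* Let $m_{max} \ge 1$ be a fixed positive integer. Then \[ \pi = i \lim_{k\to\infty} 2^{k+1} \sum_{m=1}^{m_{max}} \frac{1}{2m-1}\left( \frac{1}{\left(1 + 2i\, a_k/\sqrt{2 - a_{k-1}}\right)^{2m-1}} - \frac{1}{\left(1 - 2i\, a_k/\sqrt{2 - a_{k-1}}\right)^{2m-1}} \right). \]
   Context: Here $i$ is the imaginary unit. The nested radicals $a_k$ are defined by $a_0 = 0$ and $a_k = \sqrt{2 + a_{k-1}}$ for $k \ge 1$. Thus $a_k = \sqrt{2+\sqrt{2+\cdots+\sqrt{2}}}$ with $k$ square roots. *)

theory Defs
  imports Complex_Main
begin

fun nested_rad :: "nat \<Rightarrow> real" where
  "nested_rad 0 = 0"
| "nested_rad (Suc k) = sqrt (2 + nested_rad k)"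

end

theory Submission
  imports Defs "HOL-Real_Asymp.Real_Asymp"
begin

text \<open>
  Put \<open>\<theta> = pi / 2 ^ (k + 1)\<close>. The half-angle formulas give \<open>a k = 2 cos \<theta>\<close> and
  \<open>sqrt (2 - a (k - 1)) = 2 sin \<theta>\<close>, so every term is evaluated at \<open>cot \<theta> = 1 / t\<close>
  with \<open>t = tan \<theta> \<rightarrow> 0\<close>. There the bracket with exponent \<open>n\<close> equals
  \<open>t ^ n * (1 / (t + 2 i) ^ n - 1 / (t - 2 i) ^ n)\<close>, which is of order \<open>t ^ n\<close>. Since
  \<open>2 ^ (k + 1) * t \<rightarrow> pi\<close>, after scaling only the term \<open>n = 1\<close> survives, with limit \<open>pi / i\<close>.
\<close>

lemma nested_rad_eq_cos: "nested_rad k = 2 * cos (pi / 2 ^ (k + 1))"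
proof (induction k)
  case 0
  then show ?case by simp
next
  case (Suc k)
  define x where "x = pi / 2 ^ (k + 2)"
  have "(1::real) \<le> 2 * 2 ^ k" using one_le_power[of "2::real" k] by linarith
  then have "0 < x" "x \<le> pi / 2"
    unfolding x_def by (auto simp: field_simps)
  then have "cos x \<ge> 0" by (intro cos_ge_zero) auto
  have "2 + nested_rad k = (2 * cos x) ^ 2"
    using Suc cos_double_cos[of x] by (simp add: x_def field_simps)
  with \<open>cos x \<ge> 0\<close> show ?case by (simp add: x_def real_sqrt_mult)
qed

lemma sqrt_two_minus_nested_rad: "sqrt (2 - nested_rad k) = 2 * sin (pi / 2 ^ (k + 2))"
proof -
  define x where "x = pi / 2 ^ (k + 2)"
  have "(1::real) < 4 * 2 ^ k" using one_le_power[of "2::real" k] by linarith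
  then have "0 < x" "x < pi"
    unfolding x_def by (auto simp: field_simps)
  then have "sin x \<ge> 0" by (intro sin_ge_zero) auto
  have "2 - nested_rad k = (2 * sin x) ^ 2"
    using cos_double_sin[of x] by (simp add: nested_rad_eq_cos x_def field_simps)
  with \<open>sin x \<ge> 0\<close> show ?thesis by (simp add: x_def real_sqrt_mult)
qed

lemma nested_rad_ratio_eq_tan:
  assumes "k \<ge> 1"
  shows "sqrt (2 - nested_rad (k - 1)) / nested_rad k = tan (pi / 2 ^ (k + 1))"
proof -
  obtain j where "k = Suc j" using assms by (cases k) auto
  then show ?thesis
    by (simp only: diff_Suc_1 sqrt_two_minus_nested_rad) (simp add: nested_rad_eq_cos tan_def)
qed

lemma reciprocal_power_diff_eq:
  fixes c x :: "'a :: field"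
  assumes "n \<ge> 1"
  shows "1 / (1 + c * x) ^ n - 1 / (1 - c * x) ^ n
         = inverse x ^ n * (1 / (inverse x + c) ^ n - 1 / (inverse x - c) ^ n)"
proof (cases "x = 0")
  case True
  with assms show ?thesis by simp
next
  case False
  then have "1 + c * x = (inverse x + c) * x" "1 - c * x = (inverse x - c) * x"
    by (simp_all add: field_simps)
  then show ?thesis
    by (simp add: power_mult_distrib right_diff_distrib divide_inverse power_inverse)
qed

lemma tendsto_scaled_reciprocal_power_diff:
  fixes s x :: "nat \<Rightarrow> 'a :: real_normed_field"
  assumes "(\<lambda>k. inverse (x k)) \<longlonglongrightarrow> 0" "(\<lambda>k. s k / x k) \<longlonglongrightarrow> L" "c \<noteq> 0" "n \<ge> 1"
  shows "(\<lambda>k. s k * (1 / (1 + c * x k) ^ n - 1 / (1 - c * x k) ^ n))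
           \<longlonglongrightarrow> (if n = 1 then 2 * L / c else 0)"
proof -
  have "s k * (1 / (1 + c * x k) ^ n - 1 / (1 - c * x k) ^ n)
        = s k / x k * inverse (x k) ^ (n - 1) *
          (1 / (inverse (x k) + c) ^ n - 1 / (inverse (x k) - c) ^ n)" for k
  proof -
    have "inverse (x k) ^ n = inverse (x k) * inverse (x k) ^ (n - 1)"
      using \<open>n \<ge> 1\<close> by (cases n) auto
    then show ?thesis
      unfolding reciprocal_power_diff_eq[OF \<open>n \<ge> 1\<close>] by (simp add: divide_inverse mult_ac)
  qed
  moreover have "(\<lambda>k. s k / x k * inverse (x k) ^ (n - 1) *
          (1 / (inverse (x k) + c) ^ n - 1 / (inverse (x k) - c) ^ n))
        \<longlonglongrightarrow> L * 0 ^ (n - 1) * (1 / (0 + c) ^ n - 1 / (0 - c) ^ n)"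
    using assms by (intro tendsto_intros) auto
  moreover have "L * 0 ^ (n - 1) * (1 / (0 + c) ^ n - 1 / (0 - c) ^ n) = (if n = 1 then 2 * L / c else 0)"
    using assms by (auto simp: field_simps)
  ultimately show ?thesis by simp
qed

lemma tendsto_nested_rad_ratio:
  "(\<lambda>k. sqrt (2 - nested_rad (k - 1)) / nested_rad k) \<longlonglongrightarrow> 0"
  "(\<lambda>k. 2 ^ (k + 1) * (sqrt (2 - nested_rad (k - 1)) / nested_rad k)) \<longlonglongrightarrow> pi"
proof -
  have tan_eq: "\<forall>\<^sub>F k in sequentially. tan (pi / 2 ^ (k + 1)) = sqrt (2 - nested_rad (k - 1)) / nested_rad k"
    using eventually_ge_at_top[of 1] by eventually_elim (simp only: nested_rad_ratio_eq_tan)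
  have "(\<lambda>k. tan (pi / 2 ^ (k + 1))) \<longlonglongrightarrow> 0"
    by real_asymp
  then show "(\<lambda>k. sqrt (2 - nested_rad (k - 1)) / nested_rad k) \<longlonglongrightarrow> 0"
    using tan_eq by (rule Lim_transform_eventually)
  have "(\<lambda>k. 2 ^ (k + 1) * tan (pi / 2 ^ (k + 1))) \<longlonglongrightarrow> pi"
    by real_asymp
  then show "(\<lambda>k. 2 ^ (k + 1) * (sqrt (2 - nested_rad (k - 1)) / nested_rad k)) \<longlonglongrightarrow> pi"
    using eventually_mono[OF tan_eq] by (rule Lim_transform_eventually) (simp only:)
qed

theorem mainTheorem2:
  fixes m_max :: nat
  assumes "m_max \<ge> 1"
  shows "(\<lambda>k. \<i> * (2 ^ (k + 1) *
            (\<Sum>m = 1..m_max. (1 / of_nat (2 * m - 1)) *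
              (1 / (1 + 2 * \<i> * complex_of_real (nested_rad k / sqrt (2 - nested_rad (k - 1)))) ^ (2 * m - 1)
             - 1 / (1 - 2 * \<i> * complex_of_real (nested_rad k / sqrt (2 - nested_rad (k - 1)))) ^ (2 * m - 1)))))
         \<longlonglongrightarrow> complex_of_real pi"
proof -
  define r where "r k = complex_of_real (nested_rad k / sqrt (2 - nested_rad (k - 1)))" for k
  have inverse_r_lim: "(\<lambda>k. inverse (r k)) \<longlonglongrightarrow> 0"
    and scaled_inverse_r_lim: "(\<lambda>k. 2 ^ (k + 1) / r k) \<longlonglongrightarrow> of_real pi"
    using tendsto_of_real[OF tendsto_nested_rad_ratio(1), where 'a = complex]
      tendsto_of_real[OF tendsto_nested_rad_ratio(2), where 'a = complex]
    by (simp_all add: r_def divide_inverse mult_ac flip: of_real_inverse)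
  have term_lim: "(\<lambda>k. 2 ^ (k + 1) * (1 / (1 + 2 * \<i> * r k) ^ n - 1 / (1 - 2 * \<i> * r k) ^ n))
      \<longlonglongrightarrow> (if n = 1 then 2 * of_real pi / (2 * \<i>) else 0)" if "n \<ge> 1" for n
    using inverse_r_lim scaled_inverse_r_lim _ that by (rule tendsto_scaled_reciprocal_power_diff) simp
  have "(\<lambda>k. \<i> * (\<Sum>m = 1..m_max. 1 / of_nat (2 * m - 1) *
          (2 ^ (k + 1) * (1 / (1 + 2 * \<i> * r k) ^ (2 * m - 1) - 1 / (1 - 2 * \<i> * r k) ^ (2 * m - 1)))))
        \<longlonglongrightarrow> \<i> * (\<Sum>m = 1..m_max. 1 / of_nat (2 * m - 1) *
              (if 2 * m - 1 = 1 then 2 * of_real pi / (2 * \<i>) else 0))"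
    by (intro tendsto_intros term_lim) auto
  also have "(\<Sum>m = 1..m_max. 1 / of_nat (2 * m - 1) * (if 2 * m - 1 = 1 then 2 * of_real pi / (2 * \<i>) else 0))
             = (\<Sum>m = 1..m_max. if m = 1 then of_real pi / \<i> else 0)"
    by (rule sum.cong) auto
  also have "\<i> * (\<Sum>m = 1..m_max. if m = 1 then of_real pi / \<i> else 0) = complex_of_real pi"
    using assms by simp
  finally show ?thesis
    unfolding r_def [symmetric] by (simp only: sum_distrib_left mult.left_commute)
qed

end
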